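(* Let $\mathsf{T}$ be a rooted plane tree with $n\geq 2$ nodes and root $\mathfrak{r}$. Let $C^*\in\mathcal{M}_\mathsf{T}$ be a maximal chain with $|C^*|+f_{C^*}(\mathfrak{r})=\max_{C\in\mathcal{M}_\mathsf{T}}(|C|+f_C(\mathfrak{r}))$, and let $k=f_{C^*}(\mathfrak{r})$. Let $v_0=\mathfrak{r},v_1,\dots,v_{|C^*|-1}$ be the nodes of $C^*$ from top to bottom. For $0\leq i\leq|C^*|-2$, let $B_i=\{u\in\mathsf{T}\setminus C^*:u\leq_\mathsf{T} v_i,\ u\not\leq_\mathsf{T} v_{i+1}\}$. Define a partial order $\sqsubseteq$ on $\mathsf{T}\setminus C^*$ by: for $x\in B_i$, $y\in B_j$, if $i>j$ then $x\sqsubseteq y$; if $i=j$ then $x\sqsubseteq y$ iff $x\geq_\mathsf{T} y$. Let $v_{|C^*|},\dots,v_{|\mathsf{T}|-1}$ be an ordering of $\mathsf{T}\setminus C^*$ such that $a\leq b$ whenever $v_a\sqsubseteq v_b$. Let $\delta^\dagger$ be the ornamentation of $\mathsf{T}$ given by $\delta^\dagger(v_i)=\{v_i,v_{i+1},\dots,v_{|C^*|+k-1-i}\}$ for $0\leq i\leq k$ and $\delta^\dagger(v)=\{v\}$ for $v\notin\{v_0,\dots,v_k\}$. Then for all integers $0\leq i\leq k$ and $p\geq 0$, \[\mathsf{Pop}^p(\delta^\dagger)(v_i)=\{v_i\}\cup\{v_j:i+1\leq j\leq|C^*|+k-1-i-p\}.\]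
   Context: A rooted plane tree $\mathsf{T}$ is a finite tree with a distinguished root $\mathfrak{r}$, regarded as a poset $\leq_\mathsf{T}$ in which $v'\leq_\mathsf{T} v$ iff $v$ lies on the path from $v'$ to $\mathfrak{r}$. $\Delta_\mathsf{T}(v)=\{v':v'\leq_\mathsf{T} v\}$; a leaf is a node covering nothing. $\mathcal{M}_\mathsf{T}$ is the set of maximal chains (leaf-to-root paths). For $C\in\mathcal{M}_\mathsf{T}$ and $v\in C$: $\mathrm{height}_C(v)$ is the number of elements of $C$ strictly below $v$; if $v$ is not a leaf, $\mathrm{ch}_C(v)$ is the element of $C$ covered by $v$; $b_C(v)=|\Delta_\mathsf{T}(v)|-\mathrm{height}_C(v)-1$; $f_C(v)=0$ if $v$ is a leaf, and otherwise with $w=\mathrm{ch}_C(v)$, $f_C(v)=f_C(w)+1$ if $f_C(w)+1\leq b_C(w)$ and $f_C(v)=f_C(w)$ otherwise. An ornament is a nonempty set of nodes inducing a connected subgraph; an ornamentation is a map $\delta$ from nodes to ornaments such that the maximal element of $\delta(v)$ is $v$ and any two sets $\delta(v),\delta(v')$ are nested or disjoint. $\mathcal{O}(\mathsf{T})$ is the set of ornamentations ordered by pointwise inclusion (a lattice with meet given by pointwise intersection), and $\mathsf{Pop}(\delta)=\bigwedge(\{\delta\}\cup\{\delta':\delta'\lessdot\delta\})$; $\mathsf{Pop}^p$ is the $p$-th iterate. *)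

theory Defs
  imports Main
begin

text \<open>The edges are {v, par v} for v in V - {r}.\<close>

definition rooted_tree :: "'a set \<Rightarrow> 'a \<Rightarrow> ('a \<Rightarrow> 'a) \<Rightarrow> bool" where
  "rooted_tree V r par \<longleftrightarrow> finite V \<and> r \<in> V \<and> par r = r \<and>
     (\<forall>v\<in>V. par v \<in> V) \<and> (\<forall>v\<in>V. \<exists>k. (par ^^ k) v = r)"

definition tle :: "('a \<Rightarrow> 'a) \<Rightarrow> 'a \<Rightarrow> 'a \<Rightarrow> bool" where
  "tle par u v \<longleftrightarrow> (\<exists>k. (par ^^ k) u = v)"

definition Delta :: "'a set \<Rightarrow> ('a \<Rightarrow> 'a) \<Rightarrow> 'a \<Rightarrow> 'a set" where
  "Delta V par v = {u \<in> V. tle par u v}"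

definition is_leaf :: "'a set \<Rightarrow> ('a \<Rightarrow> 'a) \<Rightarrow> 'a \<Rightarrow> bool" where
  "is_leaf V par v \<longleftrightarrow> v \<in> V \<and> (\<forall>u\<in>V. tle par u v \<longrightarrow> u = v)"

text \<open>Maximal chains = leaf-to-root paths.\<close>
definition max_chains :: "'a set \<Rightarrow> ('a \<Rightarrow> 'a) \<Rightarrow> 'a set set" where
  "max_chains V par = {C. \<exists>l. is_leaf V par l \<and> C = {u \<in> V. tle par l u}}"

definition height :: "('a \<Rightarrow> 'a) \<Rightarrow> 'a set \<Rightarrow> 'a \<Rightarrow> nat" where
  "height par C v = card {u \<in> C. tle par u v \<and> u \<noteq> v}"

definition chain_node :: "('a \<Rightarrow> 'a) \<Rightarrow> 'a set \<Rightarrow> nat \<Rightarrow> 'a" where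
  "chain_node par C h = (THE u. u \<in> C \<and> height par C u = h)"

definition bval :: "'a set \<Rightarrow> ('a \<Rightarrow> 'a) \<Rightarrow> 'a set \<Rightarrow> 'a \<Rightarrow> nat" where
  "bval V par C v = card (Delta V par v) - height par C v - 1"

text \<open>fh h is the value f_C at the element of C of height h
  (the child ch_C of the element of height h+1 is the element of height h).\<close>
fun fh :: "'a set \<Rightarrow> ('a \<Rightarrow> 'a) \<Rightarrow> 'a set \<Rightarrow> nat \<Rightarrow> nat" where
  "fh V par C 0 = 0"
| "fh V par C (Suc h) =
     (let w = chain_node par C h in
      if fh V par C h + 1 \<le> bval V par C w then fh V par C h + 1 else fh V par C h)"

definition fval :: "'a set \<Rightarrow> ('a \<Rightarrow> 'a) \<Rightarrow> 'a set \<Rightarrow> 'a \<Rightarrow> nat" where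
  "fval V par C v = fh V par C (height par C v)"

definition adj_in :: "('a \<Rightarrow> 'a) \<Rightarrow> 'a set \<Rightarrow> 'a \<Rightarrow> 'a \<Rightarrow> bool" where
  "adj_in par S x y \<longleftrightarrow> x \<in> S \<and> y \<in> S \<and> x \<noteq> y \<and> (par x = y \<or> par y = x)"

definition ornament :: "'a set \<Rightarrow> ('a \<Rightarrow> 'a) \<Rightarrow> 'a set \<Rightarrow> bool" where
  "ornament V par S \<longleftrightarrow> S \<noteq> {} \<and> S \<subseteq> V \<and>
     (\<forall>x\<in>S. \<forall>y\<in>S. (adj_in par S)\<^sup>*\<^sup>* x y)"

text \<open>Ornamentations as functions on nodes (convention: empty outside V).\<close>
definition ornamentation :: "'a set \<Rightarrow> ('a \<Rightarrow> 'a) \<Rightarrow> ('a \<Rightarrow> 'a set) \<Rightarrow> bool" where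
  "ornamentation V par \<delta> \<longleftrightarrow>
     (\<forall>v. v \<notin> V \<longrightarrow> \<delta> v = {}) \<and>
     (\<forall>v\<in>V. ornament V par (\<delta> v) \<and> v \<in> \<delta> v \<and> (\<forall>u\<in>\<delta> v. tle par u v)) \<and>
     (\<forall>v\<in>V. \<forall>v'\<in>V. \<delta> v \<subseteq> \<delta> v' \<or> \<delta> v' \<subseteq> \<delta> v \<or> \<delta> v \<inter> \<delta> v' = {})"

definition orn_covered :: "'a set \<Rightarrow> ('a \<Rightarrow> 'a) \<Rightarrow> ('a \<Rightarrow> 'a set) \<Rightarrow> ('a \<Rightarrow> 'a set) \<Rightarrow> bool" where
  "orn_covered V par \<delta>' \<delta> \<longleftrightarrow> ornamentation V par \<delta>' \<and> ornamentation V par \<delta> \<and> \<delta>' < \<delta> \<and>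
     \<not> (\<exists>\<delta>''. ornamentation V par \<delta>'' \<and> \<delta>' < \<delta>'' \<and> \<delta>'' < \<delta>)"

definition Pop :: "'a set \<Rightarrow> ('a \<Rightarrow> 'a) \<Rightarrow> ('a \<Rightarrow> 'a set) \<Rightarrow> ('a \<Rightarrow> 'a set)" where
  "Pop V par \<delta> = Inf ({\<delta>} \<union> {\<delta>'. orn_covered V par \<delta>' \<delta>})"

definition block :: "'a set \<Rightarrow> ('a \<Rightarrow> 'a) \<Rightarrow> 'a set \<Rightarrow> (nat \<Rightarrow> 'a) \<Rightarrow> nat \<Rightarrow> 'a set" where
  "block V par C v i = {u \<in> V - C. tle par u (v i) \<and> \<not> tle par u (v (Suc i))}"

definition sqle :: "'a set \<Rightarrow> ('a \<Rightarrow> 'a) \<Rightarrow> 'a set \<Rightarrow> (nat \<Rightarrow> 'a) \<Rightarrow> 'a \<Rightarrow> 'a \<Rightarrow> bool" where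
  "sqle V par C v x y \<longleftrightarrow> (\<exists>i j. i + 2 \<le> card C \<and> j + 2 \<le> card C \<and>
      x \<in> block V par C v i \<and> y \<in> block V par C v j \<and>
      (i > j \<or> (i = j \<and> tle par y x)))"

definition delta_dagger :: "'a set \<Rightarrow> 'a set \<Rightarrow> (nat \<Rightarrow> 'a) \<Rightarrow> nat \<Rightarrow> 'a \<Rightarrow> 'a set" where
  "delta_dagger V C v k u =
     (if u \<in> v ` {0..k} then
        (let i = (LEAST i. i \<le> k \<and> v i = u) in {v j | j. i \<le> j \<and> j \<le> card C + k - 1 - i})
      else if u \<in> V then {u} else {})"

end

(*
  Write c = |C*| and, for E : {0..k} -> Z, let delta_E send v_i (i <= k) to the segment
  {v_i} u {v_j : i < j <= E i} and every other node to its singleton; delta-dagger is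
  delta_E with E i = c + k - 1 - i.

  The recursion defining f along C* leaves at least k + 1 - i off-chain nodes below v_i
  (1 <= i <= k), and the enumeration lists these before every other off-chain node, so
  v_j <= v_i whenever i <= j <= c + k - i; moreover the parent of such an off-chain v_j is
  some v_j' with i <= j' < j. Hence every segment is an ornament with top v_i, and delta_E
  is an ornamentation as long as E is antitone with E i <= c + k - 1 - i.

  An ornamentation strictly below delta_E must omit the top element v_(E i) of some segment:
  at the largest i where they differ, keeping v_(E i) would force the whole segment in, by
  convexity of ornaments and laminarity with delta(v_(i+1)). So the elements covered by
  delta_E are exactly the delta_E' where E' lowers a single E i by one, and their meet is
  delta_(E - 1).
*)

theory Submission
  imports Defs
begin

section \<open>Rooted trees and ornamentations\<close>

lemma funpow_fixpoint: "f x = x \<Longrightarrow> (f ^^ n) x = x"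
  by (induction n) auto

lemma tle_refl [simp]: "tle par u u"
  unfolding tle_def by (rule exI[of _ 0]) simp

lemma tle_trans: "tle par x y \<Longrightarrow> tle par y z \<Longrightarrow> tle par x z"
  unfolding tle_def by (metis comp_apply funpow_add)

lemma tle_parent: "tle par u (par u)"
  unfolding tle_def by (rule exI[of _ 1]) simp

lemma tle_parent_if_tle: "tle par u y \<Longrightarrow> u \<noteq> y \<Longrightarrow> tle par (par u) y"
  unfolding tle_def by (metis funpow_0 funpow_Suc_right comp_apply not0_implies_Suc)

context
  fixes V r par
  assumes tree: "rooted_tree V r par"
begin

lemma rooted_tree_tle_root: "u \<in> V \<Longrightarrow> tle par u r"
  using tree unfolding rooted_tree_def tle_def by blast

lemma rooted_tree_tle_antisym:
  assumes u: "u \<in> V" and "tle par u y" "tle par y u"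
  shows "u = y"
proof -
  obtain a b where a: "(par ^^ a) u = y" and b: "(par ^^ b) y = u"
    using assms(2,3) unfolding tle_def by blast
  show ?thesis
  proof (cases "a + b = 0")
    case True
    with a show ?thesis by simp
  next
    case False
    \<comment> \<open>u lies on a cycle of positive length, which runs into the fixed root\<close>
    have cycle: "(par ^^ (b + a)) u = u"
      using a b by (simp add: funpow_add)
    obtain K where K: "(par ^^ K) u = r"
      using rooted_tree_tle_root[OF u] unfolding tle_def by blast
    have r_fixed: "(par ^^ m) r = r" for m
      using tree by (intro funpow_fixpoint) (simp add: rooted_tree_def)
    have "u = (par ^^ ((b + a) * K)) u"
      using funpow_fixpoint[of "par ^^ (b + a)", OF cycle] by (simp add: funpow_mult)
    also have "\<dots> = (par ^^ ((b + a) * K - K)) ((par ^^ K) u)"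
    proof -
      have "K \<le> (b + a) * K"
        using False by auto
      then show ?thesis
        by (simp flip: comp_apply[of "par ^^ _"] funpow_add)
    qed
    finally have "u = r"
      using K r_fixed by simp
    then show ?thesis
      using a r_fixed by simp
  qed
qed

lemma rooted_tree_parent_neq:
  assumes "u \<in> V" "u \<noteq> r"
  shows "par u \<noteq> u"
proof
  assume "par u = u"
  then have "(par ^^ m) u = u" for m
    by (rule funpow_fixpoint)
  with assms show False
    using rooted_tree_tle_root[OF assms(1)] unfolding tle_def by auto
qed

lemma ornament_interval_closed:
  assumes S: "ornament V par S" and top: "\<forall>s\<in>S. tle par s w" "w \<in> S"
    and x: "x \<in> S" and "tle par x y" "tle par y w"
  shows "y \<in> S"
proof (rule ccontr)
  assume y: "y \<notin> S"
  have "tle par z y" if "(adj_in par S)\<^sup>*\<^sup>* x z" for z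
    using that
  proof (induction rule: rtranclp_induct)
    case base
    show ?case by fact
  next
    case (step z z')
    then consider "par z = z'" "z \<noteq> y" | "par z' = z"
      using y unfolding adj_in_def by blast
    then show ?case
      using step.IH tle_parent_if_tle tle_parent tle_trans by metis
  qed
  moreover have "(adj_in par S)\<^sup>*\<^sup>* x w"
    using S x top(2) unfolding ornament_def by blast
  ultimately have "w = y"
    using rooted_tree_tle_antisym S top(2) \<open>tle par y w\<close> unfolding ornament_def by blast
  with y top(2) show False
    by simp
qed

lemma ornamentation_interval_closed:
  assumes "ornamentation V par \<delta>" "x \<in> V" "y \<in> \<delta> x" "tle par y z" "tle par z x"
  shows "z \<in> \<delta> x"
  using assms ornament_interval_closed unfolding ornamentation_def by blast

lemma ornamentation_subset_if_mem:
  assumes \<delta>: "ornamentation V par \<delta>" and x: "x \<in> V" and y: "y \<in> \<delta> x"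
  shows "\<delta> y \<subseteq> \<delta> x"
proof (cases "y = x")
  case False
  have "y \<in> V" "y \<in> \<delta> y" "tle par y x"
    using \<delta> x y unfolding ornamentation_def ornament_def by blast+
  moreover have "\<not> \<delta> x \<subseteq> \<delta> y"
  proof
    assume "\<delta> x \<subseteq> \<delta> y"
    then have "tle par x y"
      using \<delta> x \<open>y \<in> V\<close> unfolding ornamentation_def by blast
    with False show False
      using rooted_tree_tle_antisym \<open>y \<in> V\<close> \<open>tle par y x\<close> by blast
  qed
  ultimately show ?thesis
    using \<delta> x y unfolding ornamentation_def by blast
qed simp

end

lemma le_fun_upd_insert_cases:
  fixes f g :: "'a \<Rightarrow> 'b set"
  assumes "f \<le> g" "g \<le> f(w := insert x (f w))"
  shows "g = f \<or> g = f(w := insert x (f w))"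
proof -
  have other: "g u = f u" if "u \<noteq> w" for u
    using assms that by (auto dest!: le_funD[of _ _ u])
  have "g w = f w \<or> g w = insert x (f w)"
    using assms by (auto dest!: le_funD[of _ _ w])
  then show ?thesis
  proof
    assume "g w = f w"
    with other have "g = f"
      by (metis ext)
    then show ?thesis ..
  next
    assume "g w = insert x (f w)"
    with other have "g = f(w := insert x (f w))"
      by (simp add: fun_eq_iff)
    then show ?thesis ..
  qed
qed

lemma mem_Pop_iff:
  "x \<in> Pop V par \<delta> u \<longleftrightarrow> x \<in> \<delta> u \<and> (\<forall>\<delta>'. orn_covered V par \<delta>' \<delta> \<longrightarrow> x \<in> \<delta>' u)"
  unfolding Pop_def by auto

section \<open>The chain and the enumeration\<close>

lemma fh_Suc_le: "fh V par C (Suc h) \<le> fh V par C h + 1"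
  by (simp add: Let_def)

lemma fh_le_add: "h \<le> m \<Longrightarrow> fh V par C m \<le> fh V par C h + (m - h)"
proof (induction m rule: dec_induct)
  case (step m)
  then show ?case
    using fh_Suc_le[of V par C m] by simp
qed simp

lemma fh_Suc_le_bval:
  "fh V par C h \<le> bval V par C (chain_node par C h) \<Longrightarrow>
   fh V par C (Suc h) \<le> bval V par C (chain_node par C h)"
  by (simp add: Let_def)

locale enumerated_chain =
  fixes V :: "'a set" and r :: 'a and par :: "'a \<Rightarrow> 'a"
    and Cs :: "'a set" and v :: "nat \<Rightarrow> 'a" and k :: nat
  assumes tree: "rooted_tree V r par"
    and Cs_chain: "Cs \<in> max_chains V par"
    and k_def: "k = fval V par Cs r"
    and v_bij: "bij_betw v {..<card V} V"
    and v_chain: "\<forall>i < card Cs. v i \<in> Cs"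
    and v_top: "v 0 = r"
    and v_down: "\<forall>i. Suc i < card Cs \<longrightarrow> par (v (Suc i)) = v i"
    and v_ext: "\<forall>a b. card Cs \<le> a \<and> a < card V \<and> card Cs \<le> b \<and> b < card V \<and>
                  sqle V par Cs v (v a) (v b) \<longrightarrow> a \<le> b"
begin

abbreviation "n \<equiv> card V"
abbreviation "c \<equiv> card Cs"

lemma finite_V: "finite V"
  using tree unfolding rooted_tree_def by simp

lemma obtain_leaf:
  obtains l where "is_leaf V par l" "Cs = {u \<in> V. tle par l u}"
  using Cs_chain unfolding max_chains_def by auto

lemma chain_subset: "Cs \<subseteq> V"
  using obtain_leaf by auto

lemma finite_chain: "finite Cs"
  using finite_subset[OF chain_subset finite_V] .

lemma card_chain_le: "c \<le> n"
  using card_mono[OF finite_V chain_subset] .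

lemma card_chain_pos: "0 < c"
  using obtain_leaf finite_chain unfolding is_leaf_def
  by (metis card_gt_0_iff empty_iff mem_Collect_eq tle_refl)

lemma v_in_V: "a < n \<Longrightarrow> v a \<in> V"
  using v_bij by (auto dest: bij_betwE)

lemma v_eq_iff: "a < n \<Longrightarrow> b < n \<Longrightarrow> v a = v b \<longleftrightarrow> a = b"
  using v_bij unfolding bij_betw_def inj_on_def by auto

lemma obtain_index:
  assumes "u \<in> V"
  obtains a where "a < n" "u = v a"
  using assms v_bij unfolding bij_betw_def by blast

lemma inj_on_v: "A \<subseteq> {..<n} \<Longrightarrow> inj_on v A"
  using v_bij unfolding bij_betw_def by (auto intro: inj_on_subset)

lemma image_v_chain: "v ` {..<c} = Cs"
proof -
  have "inj_on v {..<c}"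
    using card_chain_le by (intro inj_on_v) auto
  then have "card (v ` {..<c}) = c"
    by (simp add: card_image)
  moreover have "v ` {..<c} \<subseteq> Cs"
    using v_chain by auto
  ultimately show ?thesis
    using card_subset_eq[OF finite_chain] by metis
qed

lemma obtain_chain_index:
  assumes "u \<in> Cs"
  obtains j where "j < c" "u = v j"
  using assms image_v_chain by blast

lemma image_v_offchain: "v ` {c..<n} = V - Cs"
proof -
  have "{c..<n} = {..<n} - {..<c}"
    by auto
  moreover have "v ` ({..<n} - {..<c}) = v ` {..<n} - v ` {..<c}"
    using card_chain_le by (intro inj_on_image_set_diff[OF inj_on_v[of "{..<n}"]]) auto
  moreover have "v ` {..<n} = V"
    using v_bij by (simp add: bij_betw_def)
  ultimately show ?thesis
    using image_v_chain by simp
qed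

lemma chain_tle: "j \<le> j' \<Longrightarrow> j' < c \<Longrightarrow> tle par (v j') (v j)"
proof (induction j' rule: dec_induct)
  case (step m)
  then show ?case
    using v_down tle_parent[of par "v (Suc m)"] tle_trans by fastforce
qed simp

lemma chain_tle_iff: "j < c \<Longrightarrow> j' < c \<Longrightarrow> tle par (v j') (v j) \<longleftrightarrow> j \<le> j'"
  using chain_tle rooted_tree_tle_antisym[OF tree] v_in_V v_eq_iff card_chain_le
  by (metis le_cases less_le_trans)

lemma below_last_chain_node: "u \<in> V \<Longrightarrow> tle par u (v (c - 1)) \<Longrightarrow> u \<in> Cs"
proof -
  assume u: "u \<in> V" "tle par u (v (c - 1))"
  obtain l where l: "is_leaf V par l" "Cs = {u \<in> V. tle par l u}"
    using obtain_leaf .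
  then have "l \<in> Cs"
    unfolding is_leaf_def by simp
  then obtain j where j: "j < c" "l = v j"
    by (rule obtain_chain_index)
  have "v (c - 1) \<in> Cs"
    using v_chain card_chain_pos by simp
  then have "tle par (v j) (v (c - 1))"
    using l(2) j(2) by blast
  then have "j = c - 1"
    using j(1) chain_tle_iff[of "c - 1" j] by simp
  with u l(1) j(2) have "u = l"
    unfolding is_leaf_def by blast
  with \<open>l \<in> Cs\<close> show "u \<in> Cs"
    by simp
qed

lemma v_eq_iff_chain: "a < c \<Longrightarrow> b < c \<Longrightarrow> v a = v b \<longleftrightarrow> a = b"
  using v_eq_iff card_chain_le by simp

lemma card_image_v_chain_interval: "card (v ` {i..<c}) = c - i"
  using card_chain_le by (subst card_image) (auto intro: inj_on_v)

lemma chain_below_eq: "i < c \<Longrightarrow> {u \<in> Cs. tle par u (v i)} = v ` {i..<c}"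
proof -
  assume i: "i < c"
  have "{u \<in> v ` {..<c}. tle par u (v i)} = v ` {i..<c}"
    using chain_tle_iff[OF i] by force
  then show ?thesis
    by (simp only: image_v_chain)
qed

lemma height_chain: "i < c \<Longrightarrow> height par Cs (v i) = c - 1 - i"
proof -
  assume i: "i < c"
  have "{u \<in> Cs. tle par u (v i) \<and> u \<noteq> v i} = v ` {i..<c} - {v i}"
    using chain_below_eq[OF i] by blast
  also have "\<dots> = v ` {Suc i..<c}"
    using i v_eq_iff_chain by auto
  finally show ?thesis
    unfolding height_def by (simp add: card_image_v_chain_interval)
qed

lemma chain_node_chain: "h < c \<Longrightarrow> chain_node par Cs h = v (c - 1 - h)"
  unfolding chain_node_def
proof (rule the_equality)
  assume h: "h < c"
  then show "v (c - 1 - h) \<in> Cs \<and> height par Cs (v (c - 1 - h)) = h"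
    using v_chain height_chain by simp
  fix u
  assume u: "u \<in> Cs \<and> height par Cs u = h"
  then obtain j where j: "j < c" "u = v j"
    by (meson obtain_chain_index)
  with u have "c - 1 - j = h"
    using height_chain[of j] by simp
  with j have "j = c - 1 - h"
    by linarith
  with j show "u = v (c - 1 - h)"
    by simp
qed

definition offchain_below :: "nat \<Rightarrow> nat" where
  "offchain_below i = card (Delta V par (v i) - Cs)"

lemma finite_Delta: "finite (Delta V par u)"
  unfolding Delta_def using finite_V by simp

lemma bval_chain: "i < c \<Longrightarrow> bval V par Cs (v i) = offchain_below i"
proof -
  assume i: "i < c"
  have "Delta V par (v i) \<inter> Cs = v ` {i..<c}"
    using chain_below_eq[OF i] chain_subset unfolding Delta_def by blast
  then have "card (Delta V par (v i) \<inter> Cs) = c - i"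
    by (simp add: card_image_v_chain_interval)
  moreover have "card (Delta V par (v i)) =
      card (Delta V par (v i) \<inter> Cs) + card (Delta V par (v i) - Cs)"
    by (rule card_Int_Diff[OF finite_Delta])
  ultimately show ?thesis
    unfolding bval_def offchain_below_def using height_chain[OF i] i by simp
qed

lemma Delta_chain_mono: "i \<le> i' \<Longrightarrow> i' < c \<Longrightarrow> Delta V par (v i') \<subseteq> Delta V par (v i)"
  unfolding Delta_def using tle_trans[OF _ chain_tle] by blast

lemma offchain_below_antimono: "i \<le> i' \<Longrightarrow> i' < c \<Longrightarrow> offchain_below i' \<le> offchain_below i"
  unfolding offchain_below_def using Delta_chain_mono finite_Delta
  by (simp add: Diff_mono card_mono)

lemma k_eq_fh: "k = fh V par Cs (c - 1)"
  using k_def height_chain[of 0] v_top card_chain_pos unfolding fval_def by simp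

lemma k_less_card_chain: "k < c"
  using fh_le_add[of 0 "c - 1" V par Cs] k_eq_fh card_chain_pos by simp

lemma fh_Suc_le_offchain_below: "h < c \<Longrightarrow> fh V par Cs (Suc h) \<le> offchain_below (c - 1 - h)"
proof (induction h)
  case 0
  then show ?case
    using fh_Suc_le_bval[of V par Cs 0] chain_node_chain bval_chain by simp
next
  case (Suc h)
  then have "fh V par Cs (Suc h) \<le> offchain_below (c - 1 - h)"
    by simp
  also have "\<dots> \<le> offchain_below (c - 1 - Suc h)"
    using Suc.prems by (intro offchain_below_antimono) auto
  finally show ?case
    using fh_Suc_le_bval[of V par Cs "Suc h"] chain_node_chain[OF Suc.prems] bval_chain Suc.prems
    by simp
qed

lemma offchain_below_lower_bound:
  assumes "1 \<le> i" "i \<le> k"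
  shows "k + 1 \<le> offchain_below i + i"
proof -
  have i: "i < c"
    using assms k_less_card_chain by simp
  have "k \<le> fh V par Cs (c - i) + (i - 1)"
    using fh_le_add[of "c - i" "c - 1" V par Cs] k_eq_fh assms i by simp
  moreover have "fh V par Cs (c - i) \<le> offchain_below i"
    using fh_Suc_le_offchain_below[of "c - 1 - i"] i assms by (simp add: Suc_diff_Suc)
  ultimately show ?thesis
    using assms by linarith
qed

lemma card_chain_add_k_le: "c + k \<le> n"
proof (cases "k = 0")
  case True
  then show ?thesis
    using card_chain_le by simp
next
  case False
  have "Delta V par (v 0) = V"
    using rooted_tree_tle_root[OF tree] v_top unfolding Delta_def by auto
  then have "offchain_below 0 = n - c"
    unfolding offchain_below_def using card_Diff_subset[OF finite_chain chain_subset] by simp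
  moreover have "offchain_below 1 \<le> offchain_below 0"
    using False k_less_card_chain by (intro offchain_below_antimono) auto
  ultimately show ?thesis
    using offchain_below_lower_bound[of 1] False card_chain_le by simp
qed

lemma offchain_block:
  assumes u: "u \<in> V - Cs"
  obtains t where "Suc t < c" "u \<in> block V par Cs v t" "\<forall>i<c. tle par u (v i) \<longleftrightarrow> i \<le> t"
proof -
  define T where "T = {t. t < c \<and> tle par u (v t)}"
  define t where "t = Max T"
  have "finite T" "0 \<in> T"
    unfolding T_def using card_chain_pos rooted_tree_tle_root[OF tree] u v_top by auto
  then have "t \<in> T" "\<And>i. i \<in> T \<Longrightarrow> i \<le> t"
    unfolding t_def using Max_in Max_ge by auto
  then have t: "t < c" "tle par u (v t)" and t_max: "\<And>i. i < c \<Longrightarrow> tle par u (v i) \<Longrightarrow> i \<le> t"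
    unfolding T_def by auto
  have "t \<noteq> c - 1"
    using below_last_chain_node u t(2) by auto
  with t have "Suc t < c"
    by simp
  moreover have iff: "\<forall>i<c. tle par u (v i) \<longleftrightarrow> i \<le> t"
    using t_max tle_trans[OF t(2) chain_tle] t(1) by blast
  moreover from calculation have "u \<in> block V par Cs v t"
    unfolding block_def using u by simp
  ultimately show thesis
    using that by blast
qed

lemma sqle_if_below_not_below:
  assumes "x \<in> V - Cs" "y \<in> V - Cs" "i < c" "tle par x (v i)" "\<not> tle par y (v i)"
  shows "sqle V par Cs v x y"
proof -
  obtain t where t: "Suc t < c" "x \<in> block V par Cs v t" "\<forall>i<c. tle par x (v i) \<longleftrightarrow> i \<le> t"
    using offchain_block[OF assms(1)] .
  obtain t' where t': "Suc t' < c" "y \<in> block V par Cs v t'" "\<forall>i<c. tle par y (v i) \<longleftrightarrow> i \<le> t'"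
    using offchain_block[OF assms(2)] .
  have "t' < t"
    using assms(3-5) t(3) t'(3) by auto
  then show ?thesis
    unfolding sqle_def using t t' by force
qed

lemma index_le_if_sqle:
  "c \<le> a \<Longrightarrow> a < n \<Longrightarrow> c \<le> b \<Longrightarrow> b < n \<Longrightarrow> sqle V par Cs v (v a) (v b) \<Longrightarrow> a \<le> b"
  using v_ext by blast

lemma v_offchain: "c \<le> a \<Longrightarrow> a < n \<Longrightarrow> v a \<in> V - Cs"
  using image_v_offchain by auto

lemma index_less_if_below_not_below:
  assumes "c \<le> a" "a < n" "c \<le> b" "b < n" "i < c"
    and "tle par (v a) (v i)" "\<not> tle par (v b) (v i)"
  shows "a < b"
proof -
  have "a \<le> b"
    using index_le_if_sqle[OF assms(1-4)]
      sqle_if_below_not_below[OF v_offchain[OF assms(1,2)] v_offchain[OF assms(3,4)] assms(5-7)] .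
  moreover have "a \<noteq> b"
    using assms(6,7) by auto
  ultimately show ?thesis
    by simp
qed

text \<open>Off-chain nodes below v i lie in blocks B_t with t \<ge> i, while v a lies in a block
  B_t with t < i; so they all precede v a in the enumeration.\<close>

lemma offchain_below_le_if_not_below:
  assumes a: "c \<le> a" "a < n" and i: "i < c" and not_below: "\<not> tle par (v a) (v i)"
  shows "offchain_below i \<le> a - c"
proof -
  define A where "A = {a' \<in> {c..<n}. v a' \<in> Delta V par (v i)}"
  have "v ` A = v ` {c..<n} \<inter> Delta V par (v i)"
    unfolding A_def by blast
  also have "\<dots> = Delta V par (v i) - Cs"
    using image_v_offchain unfolding Delta_def by blast
  finally have "offchain_below i = card (v ` A)"
    unfolding offchain_below_def by simp
  also have "\<dots> = card A"
    by (rule card_image, rule inj_on_v) (auto simp: A_def)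
  also have "\<dots> \<le> card {c..<a}"
  proof (rule card_mono)
    show "A \<subseteq> {c..<a}"
      using index_less_if_below_not_below[OF _ _ a i _ not_below] unfolding A_def Delta_def by auto
  qed simp
  finally show ?thesis
    by simp
qed

lemma tle_chain_node_if_index_le:
  assumes "i \<le> k" "i \<le> a" "a \<le> c + k - i" "a < n"
  shows "tle par (v a) (v i)"
proof (rule ccontr)
  assume not_below: "\<not> tle par (v a) (v i)"
  have "i \<noteq> 0"
  proof
    assume "i = 0"
    with not_below show False
      using v_top rooted_tree_tle_root[OF tree v_in_V[OF assms(4)]] by simp
  qed
  moreover have "c \<le> a"
    using not_below chain_tle[OF assms(2)] by (meson not_le)
  moreover have "i < c"
    using assms(1) k_less_card_chain by simp
  ultimately show False
    using offchain_below_le_if_not_below[OF _ assms(4) _ not_below] offchain_below_lower_bound[of i]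
      assms by fastforce
qed

lemma parent_offchain_index_less:
  assumes a: "c \<le> a" "a < n" and a': "c \<le> a'" "a' < n" and parent: "par (v a) = v a'"
  shows "a' < a"
proof -
  obtain t where t: "Suc t < c" "v a \<in> block V par Cs v t"
    using offchain_block[OF v_offchain[OF a]] by blast
  have "v a \<noteq> v t"
    using v_offchain[OF a] v_chain t(1) by auto
  then have "tle par (v a') (v t)"
    using tle_parent_if_tle[of par "v a" "v t"] t(2) parent unfolding block_def by simp
  moreover have "\<not> tle par (v a') (v (Suc t))"
    using t(2) tle_trans[OF tle_parent[of par "v a"]] parent unfolding block_def by auto
  ultimately have "v a' \<in> block V par Cs v t"
    unfolding block_def using v_offchain[OF a'] by simp
  then have "sqle V par Cs v (v a') (v a)"
    unfolding sqle_def using t tle_parent[of par "v a"] parent by (intro exI[of _ t]) simp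
  then have "a' \<le> a"
    using index_le_if_sqle a a' by simp
  moreover have "v a \<noteq> r"
    using v_offchain[OF a] v_top v_chain card_chain_pos by auto
  then have "a' \<noteq> a"
    using rooted_tree_parent_neq[OF tree v_in_V[OF a(2)]] parent by auto
  ultimately show ?thesis
    by simp
qed

lemma obtain_parent_index:
  assumes "i < c" "i < j" "j < n" "tle par (v j) (v i)"
  obtains j' where "i \<le> j'" "j' < j" "par (v j) = v j'"
proof (cases "j < c")
  case True
  with assms(2) have "par (v j) = v (j - 1)"
    using v_down[rule_format, of "j - 1"] by simp
  with assms(2) show thesis
    using that[of "j - 1"] by simp
next
  case j_offchain: False
  have "v j \<noteq> v i"
    using assms v_eq_iff by simp
  with assms(4) have below: "tle par (par (v j)) (v i)"
    by (rule tle_parent_if_tle)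
  have "par (v j) \<in> V"
    using tree v_in_V[OF assms(3)] unfolding rooted_tree_def by simp
  then obtain j' where j': "j' < n" "par (v j) = v j'"
    by (rule obtain_index)
  show thesis
  proof (cases "j' < c")
    case True
    then have "i \<le> j'"
      using below j' chain_tle_iff[OF assms(1)] by simp
    with True j_offchain j' show thesis
      using that by simp
  next
    case False
    then have "j' < j"
      using parent_offchain_index_less[of j j'] j_offchain assms(3) j' by simp
    with False j' assms(1) show thesis
      using that[of j'] by simp
  qed
qed

lemma v_tle_if_index_bounded:
  assumes "i \<le> k" "i \<le> j" "int j \<le> int c + int k - 1 - int i"
  shows "j < n" "tle par (v j) (v i)"
proof -
  show "j < n"
    using assms card_chain_add_k_le k_less_card_chain by linarith
  then show "tle par (v j) (v i)"
    using assms by (intro tle_chain_node_if_index_le) auto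
qed

section \<open>Ornamentations with prescribed segment tops\<close>

text \<open>The bound e is an integer: once it drops below i + 1, the segment is just {v i}.\<close>

definition segment :: "nat \<Rightarrow> int \<Rightarrow> 'a set" where
  "segment i e = {v i} \<union> {v j | j. i + 1 \<le> j \<and> int j \<le> e}"

lemma segment_mono: "e' \<le> e \<Longrightarrow> segment i e' \<subseteq> segment i e"
  unfolding segment_def by auto

lemma v_mem_segment: "v i \<in> segment i e"
  unfolding segment_def by simp

lemma segment_eq_singleton: "e < int i + 1 \<Longrightarrow> segment i e = {v i}"
  unfolding segment_def by auto

lemma segmentE:
  assumes "x \<in> segment i e"
  obtains j where "x = v j" "i \<le> j" "j = i \<or> int j \<le> e"
  using assms unfolding segment_def by auto

lemma segment_eq_image: "segment i e = v ` ({i} \<union> {j. i + 1 \<le> j \<and> int j \<le> e})"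
  unfolding segment_def by auto

lemma segment_insert_top:
  assumes "int i + 1 \<le> e"
  shows "segment i e = insert (v (nat e)) (segment i (e - 1))"
proof -
  have "{i} \<union> {j. i + 1 \<le> j \<and> int j \<le> e} =
      insert (nat e) ({i} \<union> {j. i + 1 \<le> j \<and> int j \<le> e - 1})"
    using assms by auto
  then show ?thesis
    by (simp add: segment_eq_image)
qed

lemma segment_step:
  assumes "int i + 1 \<le> e"
  shows "segment i e = {v i, v (nat e)} \<union> segment (i + 1) (e - 1)"
proof -
  have "{i} \<union> {j. i + 1 \<le> j \<and> int j \<le> e} =
      {i, nat e} \<union> ({i + 1} \<union> {j. i + 1 + 1 \<le> j \<and> int j \<le> e - 1})"
    using assms by auto
  then show ?thesis
    by (simp add: segment_eq_image)
qed

context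
  fixes i :: nat and e :: int
  assumes i: "i \<le> k" and e: "e \<le> int c + int k - 1 - int i"
begin

lemma segment_memE:
  assumes "x \<in> segment i e"
  obtains j where "x = v j" "i \<le> j" "j = i \<or> int j \<le> e" "j < n" "tle par (v j) (v i)"
proof -
  obtain j where j: "x = v j" "i \<le> j" "j = i \<or> int j \<le> e"
    using assms by (rule segmentE)
  moreover have "int j \<le> int c + int k - 1 - int i"
    using j(3) e i k_less_card_chain by linarith
  ultimately show thesis
    using that v_tle_if_index_bounded[OF i] by blast
qed

lemma segment_subset_V: "segment i e \<subseteq> V"
proof
  fix x
  assume "x \<in> segment i e"
  then show "x \<in> V"
    by (rule segment_memE) (simp add: v_in_V)
qed

lemma segment_below: "x \<in> segment i e \<Longrightarrow> tle par x (v i)"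
  by (erule segment_memE) simp

lemma segment_connected:
  "j = i \<or> (i + 1 \<le> j \<and> int j \<le> e) \<Longrightarrow> (adj_in par (segment i e))\<^sup>*\<^sup>* (v j) (v i)"
proof (induction j rule: less_induct)
  case (less j)
  show ?case
  proof (cases "j = i")
    case False
    with less.prems have j: "i + 1 \<le> j" "int j \<le> e"
      by auto
    have v_j: "v j \<in> segment i e"
      unfolding segment_def using j by auto
    have "int j \<le> int c + int k - 1 - int i"
      using j(2) e by linarith
    then have "j < n" "tle par (v j) (v i)"
      using v_tle_if_index_bounded[OF i] j(1) by auto
    moreover have "i < c" "i < j"
      using i k_less_card_chain j(1) by simp_all
    ultimately obtain j' where j': "i \<le> j'" "j' < j" "par (v j) = v j'"
      using obtain_parent_index by blast
    have j'_range: "j' = i \<or> (i + 1 \<le> j' \<and> int j' \<le> e)"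
      using j' j by auto
    then have "v j' \<in> segment i e"
      unfolding segment_def by auto
    moreover have "v j \<noteq> v j'"
      using v_eq_iff j' \<open>j < n\<close> by simp
    ultimately have "adj_in par (segment i e) (v j) (v j')"
      unfolding adj_in_def using v_j j'(3) by simp
    then show ?thesis
      using less.IH[OF j'(2) j'_range] by (rule converse_rtranclp_into_rtranclp)
  qed simp
qed

lemma ornament_segment: "ornament V par (segment i e)"
proof -
  have to_top: "(adj_in par (segment i e))\<^sup>*\<^sup>* x (v i)" if x: "x \<in> segment i e" for x
  proof -
    obtain j where j: "x = v j" "i \<le> j" "j = i \<or> int j \<le> e"
      using x by (rule segmentE)
    then have "j = i \<or> (i + 1 \<le> j \<and> int j \<le> e)"
      by auto
    then show ?thesis
      using segment_connected j(1) by simp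
  qed
  have "symp (adj_in par (segment i e))"
    unfolding symp_def adj_in_def by auto
  then have from_top: "(adj_in par (segment i e))\<^sup>*\<^sup>* (v i) y" if "y \<in> segment i e" for y
    using sympD[OF symp_rtranclp to_top[OF that]] by blast
  have "(adj_in par (segment i e))\<^sup>*\<^sup>* x y" if "x \<in> segment i e" "y \<in> segment i e" for x y
    using rtranclp_trans[OF to_top[OF that(1)] from_top[OF that(2)]] .
  moreover have "v i \<in> segment i e"
    unfolding segment_def by simp
  ultimately show ?thesis
    unfolding ornament_def using segment_subset_V by blast
qed

end

lemma segments_nested_or_disjoint:
  assumes "i < i'" "i' \<le> k" "E i' \<le> E i"
    and "E i \<le> int c + int k - 1 - int i" "E i' \<le> int c + int k - 1 - int i'"
  shows "segment i' (E i') \<subseteq> segment i (E i) \<or> segment i (E i) \<inter> segment i' (E i') = {}"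
proof (cases "int i' \<le> E i")
  case True
  with assms(1,3) have "segment i' (E i') \<subseteq> segment i (E i)"
    unfolding segment_def by force
  then show ?thesis ..
next
  case False
  have "x \<notin> segment i' (E i')" if x: "x \<in> segment i (E i)" for x
  proof
    assume "x \<in> segment i' (E i')"
    then obtain j' where "x = v j'" "i' \<le> j'" "j' < n"
      using segment_memE[OF assms(2,5)] by metis
    moreover obtain j where "x = v j" "j = i \<or> int j \<le> E i" "j < n"
      using segment_memE[OF _ assms(4) x] assms(1,2) by (metis less_imp_le_nat order_trans)
    ultimately show False
      using False assms(1) v_eq_iff by auto
  qed
  then show ?thesis
    by blast
qed

definition orn_of :: "(nat \<Rightarrow> int) \<Rightarrow> 'a \<Rightarrow> 'a set" where
  "orn_of E u =
     (if u \<in> v ` {0..k} then (let i = (LEAST i. i \<le> k \<and> v i = u) in segment i (E i))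
      else if u \<in> V then {u} else {})"

lemma v_eq_iff_le_k: "i \<le> k \<Longrightarrow> i' \<le> k \<Longrightarrow> v i = v i' \<longleftrightarrow> i = i'"
  using v_eq_iff_chain k_less_card_chain by simp

lemma v_le_k_in_V: "i \<le> k \<Longrightarrow> v i \<in> V"
  using v_in_V k_less_card_chain card_chain_le by simp

lemma orn_of_v: "i \<le> k \<Longrightarrow> orn_of E (v i) = segment i (E i)"
proof -
  assume i: "i \<le> k"
  then have "(LEAST i'. i' \<le> k \<and> v i' = v i) = i"
    using v_eq_iff_le_k by (intro Least_equality) auto
  with i show ?thesis
    unfolding orn_of_def by simp
qed

lemma orn_of_other: "u \<notin> v ` {0..k} \<Longrightarrow> orn_of E u = (if u \<in> V then {u} else {})"
  unfolding orn_of_def by simp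

lemma orn_of_fun_upd: "i \<le> k \<Longrightarrow> orn_of (E(i := e)) = (orn_of E)(v i := segment i e)"
proof
  fix u
  assume i: "i \<le> k"
  show "orn_of (E(i := e)) u = ((orn_of E)(v i := segment i e)) u"
  proof (cases "u \<in> v ` {0..k}")
    case True
    then obtain i' where "i' \<le> k" "u = v i'"
      by auto
    then show ?thesis
      using i orn_of_v v_eq_iff_le_k by auto
  next
    case False
    with i show ?thesis
      using orn_of_other by auto
  qed
qed

lemma ornamentation_orn_of:
  assumes bounded: "\<And>i. i \<le> k \<Longrightarrow> E i \<le> int c + int k - 1 - int i"
    and antitone: "\<And>i i'. i \<le> i' \<Longrightarrow> i' \<le> k \<Longrightarrow> E i' \<le> E i"
  shows "ornamentation V par (orn_of E)"
proof -
  have "v ` {0..k} \<subseteq> V"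
    using v_le_k_in_V by auto
  then have outside: "orn_of E u = {}" if "u \<notin> V" for u
    using that orn_of_other[of u E] by auto
  have node: "ornament V par (orn_of E u) \<and> u \<in> orn_of E u \<and> (\<forall>x\<in>orn_of E u. tle par x u)"
    if u: "u \<in> V" for u
  proof (cases "u \<in> v ` {0..k}")
    case True
    then obtain i where i: "i \<le> k" "u = v i"
      by auto
    then show ?thesis
      using ornament_segment[OF i(1) bounded] segment_below[OF i(1) bounded]
      by (simp add: orn_of_v v_mem_segment)
  next
    case False
    then show ?thesis
      using u orn_of_other unfolding ornament_def by simp
  qed
  have at_most_one: "orn_of E u \<subseteq> orn_of E u' \<or> orn_of E u' \<subseteq> orn_of E u \<or>
      orn_of E u \<inter> orn_of E u' = {}" if "u \<notin> v ` {0..k}" for u u'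
    using that orn_of_other[of u E] by auto
  have laminar: "orn_of E u \<subseteq> orn_of E u' \<or> orn_of E u' \<subseteq> orn_of E u \<or>
      orn_of E u \<inter> orn_of E u' = {}" for u u'
  proof (cases "u \<in> v ` {0..k} \<and> u' \<in> v ` {0..k}")
    case True
    then obtain i i' where "i \<le> k" "u = v i" "i' \<le> k" "u' = v i'"
      by auto
    then show ?thesis
      using segments_nested_or_disjoint[of i i' E] segments_nested_or_disjoint[of i' i E]
        bounded antitone orn_of_v by (cases i i' rule: linorder_cases) auto
  next
    case False
    then show ?thesis
      using at_most_one[of u u'] at_most_one[of u' u] by blast
  qed
  show ?thesis
    unfolding ornamentation_def using outside node laminar by blast
qed

section \<open>Lower covers and Pop\<close>

definition top_index :: "nat \<Rightarrow> nat \<Rightarrow> int" where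
  "top_index p i = int c + int k - 1 - int i - int p"

definition top_index_lowered :: "nat \<Rightarrow> nat \<Rightarrow> nat \<Rightarrow> int" where
  "top_index_lowered p i = (top_index p)(i := top_index p i - 1)"

lemma ornamentation_top_index: "ornamentation V par (orn_of (top_index p))"
  by (rule ornamentation_orn_of) (auto simp: top_index_def)

lemma ornamentation_top_index_lowered: "ornamentation V par (orn_of (top_index_lowered p i))"
  by (rule ornamentation_orn_of) (auto simp: top_index_lowered_def top_index_def)

lemma orn_of_top_index_lowered_v:
  "i \<le> k \<Longrightarrow> i' \<le> k \<Longrightarrow>
   orn_of (top_index_lowered p i) (v i') =
     segment i' (if i' = i then top_index p i' - 1 else top_index p i')"
  using orn_of_v unfolding top_index_lowered_def by simp

lemma orn_of_top_index_eq_insert: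
  assumes "i \<le> k" "int i + 1 \<le> top_index p i"
  shows "orn_of (top_index p) = (orn_of (top_index_lowered p i))
    (v i := insert (v (nat (top_index p i))) (orn_of (top_index_lowered p i) (v i)))"
  using orn_of_fun_upd[of i "top_index_lowered p i" "top_index p i"] assms
    segment_insert_top[OF assms(2)] orn_of_top_index_lowered_v[OF assms(1,1)]
  unfolding top_index_lowered_def by simp

lemma top_not_mem_segment:
  assumes "i \<le> k" "int i + 1 \<le> top_index p i"
  shows "v (nat (top_index p i)) \<notin> segment i (top_index p i - 1)"
proof
  assume "v (nat (top_index p i)) \<in> segment i (top_index p i - 1)"
  then obtain j where "v (nat (top_index p i)) = v j" "j = i \<or> int j \<le> top_index p i - 1" "j < n"
    using segment_memE[OF assms(1), of "top_index p i - 1"] unfolding top_index_def by auto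
  moreover have "nat (top_index p i) < n"
    using v_tle_if_index_bounded(1)[OF assms(1), of "nat (top_index p i)"] assms(2)
    unfolding top_index_def by linarith
  ultimately show False
    using assms(2) v_eq_iff by auto
qed

lemma orn_covered_top_index_lowered:
  assumes i: "i \<le> k" and top: "int i + 1 \<le> top_index p i"
  shows "orn_covered V par (orn_of (top_index_lowered p i)) (orn_of (top_index p))"
proof -
  let ?L = "orn_of (top_index_lowered p i)" and ?J = "v (nat (top_index p i))"
  have upd: "orn_of (top_index p) = ?L(v i := insert ?J (?L (v i)))"
    using orn_of_top_index_eq_insert[OF i top] .
  have "?J \<notin> ?L (v i)"
    using top_not_mem_segment[OF i top] orn_of_top_index_lowered_v[OF i i] by simp
  then have less: "?L < orn_of (top_index p)"
    unfolding upd by (auto simp: less_fun_def le_fun_def fun_eq_iff)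
  have "\<not> (?L < \<delta> \<and> \<delta> < orn_of (top_index p))" for \<delta>
  proof
    assume "?L < \<delta> \<and> \<delta> < orn_of (top_index p)"
    then have "?L < \<delta>" "\<delta> < ?L(v i := insert ?J (?L (v i)))"
      unfolding upd by simp_all
    with le_fun_upd_insert_cases[OF less_imp_le less_imp_le, OF this] show False
      by auto
  qed
  with less show ?thesis
    unfolding orn_covered_def using ornamentation_top_index_lowered ornamentation_top_index
    by blast
qed

lemma le_orn_of_eq_other:
  assumes "ornamentation V par \<delta>" "\<delta> \<le> orn_of E" "u \<notin> v ` {0..k}"
  shows "\<delta> u = orn_of E u"
proof -
  have "\<delta> u \<subseteq> (if u \<in> V then {u} else {})"
    using le_funD[OF assms(2)] orn_of_other[OF assms(3)] by metis
  moreover have "u \<in> V \<Longrightarrow> u \<in> \<delta> u"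
    using assms(1) unfolding ornamentation_def by blast
  ultimately show ?thesis
    using orn_of_other[OF assms(3)] by auto
qed

text \<open>For i = k the segment lies on C*. For i < k it consists of v i, its top and
  \<delta> (v (i + 1)), and the latter lies inside \<delta> (v i) by laminarity, because v (i + 1) lies
  between the top and v i.\<close>

lemma segment_subset_if_top_mem:
  assumes \<delta>: "ornamentation V par \<delta>" and i: "i \<le> k" and top: "int i + 1 \<le> top_index p i"
    and next_node: "i < k \<Longrightarrow> \<delta> (v (i + 1)) = segment (i + 1) (top_index p (i + 1))"
    and top_mem: "v (nat (top_index p i)) \<in> \<delta> (v i)"
  shows "segment i (top_index p i) \<subseteq> \<delta> (v i)"
proof -
  define J where "J = nat (top_index p i)"
  have J: "i + 1 \<le> J" "int J \<le> int c + int k - 1 - int i"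
    using top unfolding J_def top_index_def by auto
  have v_i: "v i \<in> V"
    using v_le_k_in_V[OF i] .
  have closed: "v j \<in> \<delta> (v i)" if "tle par (v J) (v j)" "tle par (v j) (v i)" for j
    using ornamentation_interval_closed[OF tree \<delta> v_i] top_mem that unfolding J_def by blast
  show ?thesis
  proof (cases "i = k")
    case True
    then have "J < c"
      using J by linarith
    show ?thesis
    proof
      fix x
      assume "x \<in> segment i (top_index p i)"
      then obtain j where j: "x = v j" "i \<le> j" "j = i \<or> int j \<le> top_index p i"
        by (rule segmentE)
      then have "j \<le> J"
        using J(1) unfolding J_def by auto
      with j show "x \<in> \<delta> (v i)"
        using closed chain_tle \<open>J < c\<close> by simp
    qed
  next
    case False
    then have "i + 1 \<le> k"
      using i by simp
    have "tle par (v J) (v (i + 1))"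
      using J v_tle_if_index_bounded(1)[OF i _ J(2)] \<open>i + 1 \<le> k\<close>
      by (intro tle_chain_node_if_index_le) auto
    moreover have "tle par (v (i + 1)) (v i)"
      using chain_tle \<open>i + 1 \<le> k\<close> k_less_card_chain by simp
    ultimately have "\<delta> (v (i + 1)) \<subseteq> \<delta> (v i)"
      using closed ornamentation_subset_if_mem[OF tree \<delta> v_i] by blast
    then have "segment (i + 1) (top_index p i - 1) \<subseteq> \<delta> (v i)"
      using next_node False i by (simp add: top_index_def algebra_simps)
    moreover have "v i \<in> \<delta> (v i)"
      using \<delta> v_i unfolding ornamentation_def by blast
    ultimately show ?thesis
      using segment_step[OF top] top_mem by auto
  qed
qed

lemma obtain_missing_top:
  assumes \<delta>: "ornamentation V par \<delta>" and less: "\<delta> < orn_of (top_index p)"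
  obtains i where "i \<le> k" "int i + 1 \<le> top_index p i" "v (nat (top_index p i)) \<notin> \<delta> (v i)"
proof -
  define S where "S = {i. i \<le> k \<and> \<delta> (v i) \<noteq> segment i (top_index p i)}"
  have "S \<noteq> {}"
  proof
    assume "S = {}"
    then have "\<delta> u = orn_of (top_index p) u" for u
    proof (cases "u \<in> v ` {0..k}")
      case True
      with \<open>S = {}\<close> show ?thesis
        using orn_of_v unfolding S_def by auto
    qed (use le_orn_of_eq_other[OF \<delta> less_imp_le[OF less]] in blast)
    then have "\<delta> = orn_of (top_index p)"
      by (rule ext)
    with less show False
      by simp
  qed
  define i where "i = Max S"
  have "finite S"
    unfolding S_def by simp
  then have i: "i \<le> k" "\<delta> (v i) \<noteq> segment i (top_index p i)" and i_max: "\<And>i'. i' \<in> S \<Longrightarrow> i' \<le> i"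
    using Max_in[OF _ \<open>S \<noteq> {}\<close>] unfolding i_def S_def by auto
  have sub: "\<delta> (v i) \<subseteq> segment i (top_index p i)"
    using le_funD[OF less_imp_le[OF less], of "v i"] orn_of_v[OF i(1)] by simp
  have "v i \<in> \<delta> (v i)"
    using \<delta> v_le_k_in_V[OF i(1)] unfolding ornamentation_def by simp
  then have top: "int i + 1 \<le> top_index p i"
    using sub i(2) segment_eq_singleton by fastforce
  have "i < k \<Longrightarrow> \<delta> (v (i + 1)) = segment (i + 1) (top_index p (i + 1))"
    using i_max[of "i + 1"] unfolding S_def by fastforce
  then have "v (nat (top_index p i)) \<notin> \<delta> (v i)"
    using segment_subset_if_top_mem[OF \<delta> i(1) top] sub i(2) by blast
  with i(1) top show thesis
    by (rule that)
qed

lemma le_top_index_lowered_if_top_not_mem: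
  assumes i: "i \<le> k" "int i + 1 \<le> top_index p i"
    and le: "\<delta> \<le> orn_of (top_index p)" and top: "v (nat (top_index p i)) \<notin> \<delta> (v i)"
  shows "\<delta> \<le> orn_of (top_index_lowered p i)"
proof (rule le_funI)
  fix u
  from le_funD[OF le, of u] top show "\<delta> u \<subseteq> orn_of (top_index_lowered p i) u"
    unfolding orn_of_top_index_eq_insert[OF i] by (cases "u = v i") auto
qed

lemma orn_covered_top_index_iff:
  "orn_covered V par \<delta> (orn_of (top_index p)) \<longleftrightarrow>
     (\<exists>i\<le>k. int i + 1 \<le> top_index p i \<and> \<delta> = orn_of (top_index_lowered p i))"
proof
  assume cov: "orn_covered V par \<delta> (orn_of (top_index p))"
  then have \<delta>: "ornamentation V par \<delta>" and less: "\<delta> < orn_of (top_index p)"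
    unfolding orn_covered_def by blast+
  obtain i where i: "i \<le> k" "int i + 1 \<le> top_index p i" "v (nat (top_index p i)) \<notin> \<delta> (v i)"
    using obtain_missing_top[OF \<delta> less] .
  have "\<delta> \<le> orn_of (top_index_lowered p i)"
    using le_top_index_lowered_if_top_not_mem[OF i(1,2) less_imp_le[OF less] i(3)] .
  moreover have "\<not> \<delta> < orn_of (top_index_lowered p i)"
    using cov orn_covered_top_index_lowered[OF i(1,2)] ornamentation_top_index_lowered
    unfolding orn_covered_def by blast
  ultimately show "\<exists>i\<le>k. int i + 1 \<le> top_index p i \<and> \<delta> = orn_of (top_index_lowered p i)"
    using i by (auto simp: less_le)
next
  assume "\<exists>i\<le>k. int i + 1 \<le> top_index p i \<and> \<delta> = orn_of (top_index_lowered p i)"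
  then show "orn_covered V par \<delta> (orn_of (top_index p))"
    using orn_covered_top_index_lowered by blast
qed

lemma Pop_orn_of_top_index: "Pop V par (orn_of (top_index p)) = orn_of (top_index (Suc p))"
proof (intro ext set_eqI)
  fix u x
  have top_Suc: "top_index (Suc p) i = top_index p i - 1" for i
    unfolding top_index_def by simp
  have "x \<in> Pop V par (orn_of (top_index p)) u \<longleftrightarrow>
      x \<in> orn_of (top_index p) u \<and>
      (\<forall>i\<le>k. int i + 1 \<le> top_index p i \<longrightarrow> x \<in> orn_of (top_index_lowered p i) u)"
    unfolding mem_Pop_iff orn_covered_top_index_iff by blast
  also have "\<dots> \<longleftrightarrow> x \<in> orn_of (top_index (Suc p)) u"
  proof (cases "u \<in> v ` {0..k}")
    case True
    then obtain i' where i': "i' \<le> k" "u = v i'"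
      by auto
    show ?thesis
    proof (cases "int i' + 1 \<le> top_index p i'")
      case True
      have "segment i' (top_index p i' - 1) \<subseteq> segment i' (top_index p i')"
        by (rule segment_mono) simp
      with True i' show ?thesis
        using orn_of_top_index_lowered_v orn_of_v top_Suc by auto
    next
      case False
      then have "segment i' (top_index p i') = {v i'}" "segment i' (top_index p i' - 1) = {v i'}"
        using segment_eq_singleton by simp_all
      with i' show ?thesis
        using orn_of_top_index_lowered_v orn_of_v top_Suc v_mem_segment by auto
    qed
  next
    case False
    then show ?thesis
      using orn_of_other by auto
  qed
  finally show "x \<in> Pop V par (orn_of (top_index p)) u \<longleftrightarrow> x \<in> orn_of (top_index (Suc p)) u" .
qed

lemma delta_dagger_eq_orn_of: "delta_dagger V Cs v k = orn_of (top_index 0)"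
proof
  fix u
  show "delta_dagger V Cs v k u = orn_of (top_index 0) u"
  proof (cases "u \<in> v ` {0..k}")
    case True
    then obtain i where i: "i \<le> k" "u = v i"
      by auto
    then have least: "(LEAST i'. i' \<le> k \<and> v i' = u) = i"
      using v_eq_iff_le_k by (intro Least_equality) auto
    have "{v j |j. i \<le> j \<and> j \<le> c + k - 1 - i} = v ` {j. i \<le> j \<and> j \<le> c + k - 1 - i}"
      by blast
    also have "{j. i \<le> j \<and> j \<le> c + k - 1 - i} = {i} \<union> {j. i + 1 \<le> j \<and> int j \<le> top_index 0 i}"
      unfolding top_index_def using i(1) k_less_card_chain by auto
    finally have "{v j |j. i \<le> j \<and> j \<le> c + k - 1 - i} = segment i (top_index 0 i)"
      by (simp only: segment_eq_image)
    with True i(1) least show ?thesis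
      unfolding delta_dagger_def orn_of_def by simp
  next
    case False
    then show ?thesis
      unfolding delta_dagger_def orn_of_def by simp
  qed
qed

lemma Pop_iterate_delta_dagger: "(Pop V par ^^ p) (delta_dagger V Cs v k) = orn_of (top_index p)"
  by (induction p) (simp_all add: delta_dagger_eq_orn_of Pop_orn_of_top_index)

end

theorem lemma3p2:
  fixes V :: "'a set" and r :: 'a and par :: "'a \<Rightarrow> 'a"
    and Cs :: "'a set" and v :: "nat \<Rightarrow> 'a" and k :: nat
  assumes tree: "rooted_tree V r par"
    and n2: "card V \<ge> 2"
    and Cs_chain: "Cs \<in> max_chains V par"
    and Cs_max: "\<forall>C\<in>max_chains V par. card C + fval V par C r \<le> card Cs + fval V par Cs r"
    and k_def: "k = fval V par Cs r"
    and v_bij: "bij_betw v {..<card V} V"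
    and v_chain: "\<forall>i < card Cs. v i \<in> Cs"
    and v_top: "v 0 = r"
    and v_down: "\<forall>i. Suc i < card Cs \<longrightarrow> par (v (Suc i)) = v i"
    and v_ext: "\<forall>a b. card Cs \<le> a \<and> a < card V \<and> card Cs \<le> b \<and> b < card V \<and>
                  sqle V par Cs v (v a) (v b) \<longrightarrow> a \<le> b"
  shows "\<forall>i p. i \<le> k \<longrightarrow>
     ((Pop V par ^^ p) (delta_dagger V Cs v k)) (v i) =
       {v i} \<union> {v j | j. i + 1 \<le> j \<and>
                  int j \<le> int (card Cs) + int k - 1 - int i - int p}"
proof -
  interpret enumerated_chain V r par Cs v k
    using tree Cs_chain k_def v_bij v_chain v_top v_down v_ext by unfold_locales
  show ?thesis
    using Pop_iterate_delta_dagger orn_of_v unfolding segment_def top_index_def by simp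
qed

end
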